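(* Let $T$ be a countable tree without leaves (vertices of infinite degree allowed), $P=(p(x,y))$ a stochastic nearest-neighbour transition matrix on $T$, and $\lambda\in\mathbb C$. Suppose the oriented edges carry $\lambda$-weights $f(x,y)\in\mathbb C$ satisfying for every vertex $x$ and neighbour $y$: (i) $f(x,y)f(y,x)\neq1$; (ii) $u(x,x)=\sum_{v\sim x}p(x,v)f(v,x)$ converges absolutely and $u(x,x)\neq\lambda$; (iii) $\lambda f(x,y)=p(x,y)+\bigl(u(x,x)-p(x,y)f(y,x)\bigr)f(x,y)$. Extend $f$ to all pairs by $f(x,x)=1$ and multiplicatively along geodesics: $f(x,y)=\prod_{i=1}^k f(x_{i-1},x_i)$ if the geodesic from $x$ to $y$ is $[x_0,\dots,x_k]$. Define $g(x,y)=f(x,y)/(\lambda-u(y,y))$ for $x,y\in T$. Then for every $x\in T$ and every neighbour $y$ of $x$: $$g(x,x)p(x,y)=\frac{f(x,y)}{1-f(x,y)f(y,x)},\qquad g(x,x)g(y,y)=g(x,y)\Bigl(\frac1{p(x,y)}+g(y,x)\Bigr),$$ $$\lambda\,g(x,x)=1+\sum_{y:\,y\sim x}\frac{f(x,y)f(y,x)}{1-f(x,y)f(y,x)},$$ and when $x$ has infinite degree the last sum converges absolutely.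
   Context: A nearest-neighbour stochastic transition matrix means $p(x,y)>0$ iff $x\sim y$ and $\sum_y p(x,y)=1$ for all $x$. A leaf is a vertex of degree $1$. *)

theory Defs
  imports "HOL-Analysis.Analysis"
begin

definition is_walk :: "('a \<Rightarrow> 'a \<Rightarrow> bool) \<Rightarrow> 'a list \<Rightarrow> 'a \<Rightarrow> 'a \<Rightarrow> bool" where
  "is_walk E xs x y \<longleftrightarrow> xs \<noteq> [] \<and> hd xs = x \<and> last xs = y \<and>
     (\<forall>i. Suc i < length xs \<longrightarrow> E (xs ! i) (xs ! Suc i))"

text \<open>A geodesic from x to y: a path (no repeated vertices) from x to y.
  In a tree it exists and is unique.\<close>
definition is_geodesic :: "('a \<Rightarrow> 'a \<Rightarrow> bool) \<Rightarrow> 'a list \<Rightarrow> 'a \<Rightarrow> 'a \<Rightarrow> bool" where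
  "is_geodesic E xs x y \<longleftrightarrow> is_walk E xs x y \<and> distinct xs"

definition is_tree :: "('a \<Rightarrow> 'a \<Rightarrow> bool) \<Rightarrow> bool" where
  "is_tree E \<longleftrightarrow>
     (\<forall>x y. E x y \<longrightarrow> E y x) \<and> (\<forall>x. \<not> E x x) \<and>
     (\<forall>x y. \<exists>xs. is_walk E xs x y) \<and>
     \<not> (\<exists>xs. 3 \<le> length xs \<and> distinct xs \<and> is_walk E xs (hd xs) (last xs) \<and> E (last xs) (hd xs))"

definition is_leaf :: "('a \<Rightarrow> 'a \<Rightarrow> bool) \<Rightarrow> 'a \<Rightarrow> bool" where
  "is_leaf E x \<longleftrightarrow> card {y. E x y} = 1"

definition nn_stochastic :: "('a \<Rightarrow> 'a \<Rightarrow> bool) \<Rightarrow> ('a \<Rightarrow> 'a \<Rightarrow> real) \<Rightarrow> bool" where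
  "nn_stochastic E p \<longleftrightarrow> (\<forall>x y. p x y > 0 \<longleftrightarrow> E x y) \<and> (\<forall>x y. p x y \<ge> 0) \<and>
     (\<forall>x. (p x has_sum 1) UNIV)"

definition uxx :: "('a \<Rightarrow> 'a \<Rightarrow> bool) \<Rightarrow> ('a \<Rightarrow> 'a \<Rightarrow> real) \<Rightarrow> ('a \<Rightarrow> 'a \<Rightarrow> complex) \<Rightarrow> 'a \<Rightarrow> complex" where
  "uxx E p f x = (\<Sum>\<^sub>\<infinity>v\<in>{v. E x v}. complex_of_real (p x v) * f v x)"

definition fext :: "('a \<Rightarrow> 'a \<Rightarrow> bool) \<Rightarrow> ('a \<Rightarrow> 'a \<Rightarrow> complex) \<Rightarrow> 'a \<Rightarrow> 'a \<Rightarrow> complex" where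
  "fext E f x y = (let xs = (THE xs. is_geodesic E xs x y) in
      prod_list (map2 f xs (tl xs)))"

definition gfun :: "('a \<Rightarrow> 'a \<Rightarrow> bool) \<Rightarrow> ('a \<Rightarrow> 'a \<Rightarrow> real) \<Rightarrow> ('a \<Rightarrow> 'a \<Rightarrow> complex) \<Rightarrow> complex \<Rightarrow> 'a \<Rightarrow> 'a \<Rightarrow> complex" where
  "gfun E p f lam x y = fext E f x y / (lam - uxx E p f y)"

end

theory Submission
  imports Defs
begin

text \<open>On edges the extended weights and the Green function reduce to the edge weights, and
  g(x,x) = 1/(\<lambda> - u(x,x)). Rearranged, hypothesis (iii) says
  (\<lambda> - u(x,x)) f(x,y) = p(x,y)(1 - f(x,y) f(y,x)), i.e. f(x,y)/(1 - f(x,y)f(y,x)) = p(x,y) g(x,x).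
  The first two identities are then field algebra, and summing
  f(x,y)f(y,x)/(1 - f(x,y)f(y,x)) = p(x,y) f(y,x) g(x,x) over the neighbours y gives
  u(x,x) g(x,x) = \<lambda> g(x,x) - 1; absolute convergence is inherited from that of u(x,x).\<close>

lemma distinct_hd_eq_last_imp_length_1:
  assumes "distinct xs" "xs \<noteq> []" "hd xs = last xs"
  shows "length xs = 1"
proof (rule ccontr)
  assume "length xs \<noteq> 1"
  with assms(2) have "0 \<noteq> length xs - 1" "length xs - 1 < length xs" by (cases xs; simp)+
  moreover have "xs ! 0 = xs ! (length xs - 1)"
    using assms by (simp add: hd_conv_nth last_conv_nth)
  ultimately show False using assms(1,2) nth_eq_iff_index_eq by fastforce
qed

lemma the_geodesic_refl: "(THE xs. is_geodesic E xs x x) = [x]"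
proof (rule the_equality)
  show "is_geodesic E [x] x x" by (simp add: is_geodesic_def is_walk_def)
next
  fix xs assume "is_geodesic E xs x x"
  hence xs: "distinct xs" "xs \<noteq> []" "hd xs = x" "last xs = x"
    by (auto simp: is_geodesic_def is_walk_def)
  hence "length xs = 1" by (metis distinct_hd_eq_last_imp_length_1)
  with xs show "xs = [x]" by (cases xs) auto
qed

lemma fext_refl: "fext E f x x = 1"
  by (simp add: fext_def the_geodesic_refl)

lemma tree_sym: "is_tree E \<Longrightarrow> E x y \<Longrightarrow> E y x"
  by (simp add: is_tree_def)

lemma tree_irrefl: "is_tree E \<Longrightarrow> \<not> E x x"
  by (simp add: is_tree_def)

lemma the_geodesic_edge:
  assumes tree: "is_tree E" and xy: "E x y"
  shows "(THE xs. is_geodesic E xs x y) = [x, y]"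
proof (rule the_equality)
  show "is_geodesic E [x, y] x y"
    using tree xy tree_irrefl[OF tree, of x]
    by (auto simp: is_geodesic_def is_walk_def nth_Cons split: nat.splits)
next
  fix xs assume "is_geodesic E xs x y"
  hence walk: "is_walk E xs x y" and "distinct xs" by (auto simp: is_geodesic_def)
  hence xs: "xs \<noteq> []" "hd xs = x" "last xs = y" by (auto simp: is_walk_def)
  have "x \<noteq> y" using tree_irrefl[OF tree] xy by blast
  with xs have "length xs \<noteq> 1" by (cases xs) auto
  moreover have "\<not> 3 \<le> length xs"
    \<comment> \<open>otherwise xs closed up by the edge y x would be a cycle\<close>
    using tree tree_sym[OF tree xy] walk xs \<open>distinct xs\<close> unfolding is_tree_def by metis
  ultimately have "length xs = 2" using xs(1) length_greater_0_conv[of xs] by linarith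
  with xs show "xs = [x, y]"
    by (cases xs; cases "tl xs") auto
qed

lemma fext_edge: "is_tree E \<Longrightarrow> E x y \<Longrightarrow> fext E f x y = f x y"
  by (simp add: fext_def the_geodesic_edge)

lemma gfun_diag: "gfun E p f lam x x = 1 / (lam - uxx E p f x)"
  by (simp add: gfun_def fext_refl)

lemma gfun_edge: "is_tree E \<Longrightarrow> E x y \<Longrightarrow> gfun E p f lam x y = f x y / (lam - uxx E p f y)"
  by (simp add: gfun_def fext_edge)

text \<open>In the next two lemmas a = f(x,y), b = f(y,x), u = u(x,x), v = u(y,y), and the first
  hypothesis is (iii).\<close>

lemma edge_equation_quotient:
  fixes a b p u lam :: "'a :: field"
  assumes "lam * a = p + (u - p * b) * a" "a * b \<noteq> 1" "u \<noteq> lam"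
  shows "a / (1 - a * b) = p / (lam - u)"
proof -
  have "(lam - u) * a = p * (1 - a * b)" using assms(1) by (simp add: algebra_simps)
  thus ?thesis using assms(2,3) by (simp add: field_simps)
qed

lemma edge_equation_green_product:
  fixes a b p u v lam :: "'a :: field"
  assumes "lam * a = p + (u - p * b) * a" "p \<noteq> 0" "u \<noteq> lam" "v \<noteq> lam"
  shows "1 / (lam - u) * (1 / (lam - v)) = a / (lam - v) * (1 / p + b / (lam - u))"
proof -
  have "a * (lam - u + p * b) = p" using assms(1) by (simp add: algebra_simps)
  hence "a / (lam - v) * (1 / p + b / (lam - u)) = p / (p * (lam - u) * (lam - v))"
    using assms(2-4) by (simp add: field_simps)
  thus ?thesis using assms(2) by simp
qed

theorem lemma3p2:
  fixes E :: "'a \<Rightarrow> 'a \<Rightarrow> bool" and p :: "'a \<Rightarrow> 'a \<Rightarrow> real"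
    and f :: "'a \<Rightarrow> 'a \<Rightarrow> complex" and lam :: complex
  assumes countV: "countable (UNIV :: 'a set)"
    and tree: "is_tree E"
    and noleaf: "\<And>x. \<not> is_leaf E x"
    and stoch: "nn_stochastic E p"
    and hi: "\<And>x y. E x y \<Longrightarrow> f x y * f y x \<noteq> 1"
    and hii_sum: "\<And>x. (\<lambda>v. norm (complex_of_real (p x v) * f v x)) summable_on {v. E x v}"
    and hii_ne: "\<And>x. uxx E p f x \<noteq> lam"
    and hiii: "\<And>x y. E x y \<Longrightarrow>
       lam * f x y = complex_of_real (p x y) + (uxx E p f x - complex_of_real (p x y) * f y x) * f x y"
  shows "(\<forall>x y. E x y \<longrightarrow>
      gfun E p f lam x x * complex_of_real (p x y) = f x y / (1 - f x y * f y x) \<and>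
      gfun E p f lam x x * gfun E p f lam y y
        = gfun E p f lam x y * (1 / complex_of_real (p x y) + gfun E p f lam y x))
    \<and> (\<forall>x. lam * gfun E p f lam x x
        = 1 + (\<Sum>\<^sub>\<infinity>y\<in>{y. E x y}. f x y * f y x / (1 - f x y * f y x)))
    \<and> (\<forall>x. infinite {y. E x y} \<longrightarrow>
        (\<lambda>y. norm (f x y * f y x / (1 - f x y * f y x))) summable_on {y. E x y})"
proof -
  have p_nonzero: "complex_of_real (p x y) \<noteq> 0" if "E x y" for x y
    using stoch that unfolding nn_stochastic_def by force
  have quotient: "f x y / (1 - f x y * f y x) = complex_of_real (p x y) / (lam - uxx E p f x)"
    if "E x y" for x y using edge_equation_quotient[OF hiii[OF that] hi[OF that] hii_ne] .
  have summand: "f x y * f y x / (1 - f x y * f y x)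
      = complex_of_real (p x y) * f y x * (1 / (lam - uxx E p f x))" if "E x y" for x y
    using quotient[OF that] by (metis times_divide_eq_right mult.commute mult_1_right)
  have sum: "(\<Sum>\<^sub>\<infinity>y\<in>{y. E x y}. f x y * f y x / (1 - f x y * f y x))
      = uxx E p f x * (1 / (lam - uxx E p f x))" for x
    by (subst infsum_cong[OF summand]) (simp_all only: mem_Collect_eq infsum_cmult_left' uxx_def)
  have summable: "(\<lambda>y. norm (f x y * f y x / (1 - f x y * f y x))) summable_on {y. E x y}" for x
    using summable_on_cmult_left[OF hii_sum[of x], where c = "1 / norm (lam - uxx E p f x)"]
    by (rule summable_on_cong[THEN iffD1, rotated]) (simp add: summand norm_mult norm_divide)
  have "lam * gfun E p f lam x x = 1 + (\<Sum>\<^sub>\<infinity>y\<in>{y. E x y}. f x y * f y x / (1 - f x y * f y x))"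
    for x unfolding sum gfun_diag using hii_ne[of x] by (simp add: field_simps)
  moreover have "gfun E p f lam x x * gfun E p f lam y y
      = gfun E p f lam x y * (1 / complex_of_real (p x y) + gfun E p f lam y x)" if "E x y" for x y
    using edge_equation_green_product[OF hiii[OF that] p_nonzero[OF that] hii_ne hii_ne] that
    by (simp add: gfun_diag gfun_edge tree tree_sym)
  ultimately show ?thesis using quotient summable by (simp add: gfun_diag)
qed

end
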